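(* Let $(\mathbf f,\mathbf g)$ be a vector admissible system, $\epsilon\in\mathcal E$, $L,w\in\mathbb N$, and let $\mathbf X\in\mathcal X^{2L+w}$ be a fixed point of the one-sided spatially-coupled system. Then $$\mathrm{vec}\big(U'(\mathbf X;\epsilon)\big)\cdot\mathrm{vec}(\mathbf S\mathbf X-\mathbf X)=0,$$ where $U'(\mathbf X;\epsilon)$ is the matrix of partial derivatives $[U'(\mathbf X;\epsilon)]_{i,j}=\partial U(\mathbf X;\epsilon)/\partial x_{i,j}$ of the coupled-system potential.
   Context: Let $d\in\mathbb N$, $\mathcal X=[0,1]^d$, $\mathcal E=[0,1]$, $\mathcal X^\circ=\mathcal X\setminus\{\mathbf 0\}$; vectors are row vectors and $\mathbf x\preceq\mathbf y$ means $x_i\le y_i$ for all $i$. Let $\mathbf D$ be a $d\times d$ positive diagonal matrix, $\mathbf f:\mathcal X\times\mathcal E\to\mathcal X$, $\mathbf g:\mathcal X\to\mathcal X$, and $F,G$ scalar functionals with $\nabla_{\mathbf x}F(\mathbf x;\epsilon)=\mathbf f(\mathbf x;\epsilon)\mathbf D$, $\nabla G(\mathbf x)=\mathbf g(\mathbf x)\mathbf D$, $F(\mathbf 0;\epsilon)=G(\mathbf 0)=0$. $(\mathbf f,\mathbf g)$ is a vector admissible system if: (i) $\mathbf f,\mathbf g$ are $C^2$; (ii) $\mathbf f(\mathbf x;\epsilon)$, $\mathbf g(\mathbf x)$ are non-decreasing in $\mathbf x$ w.r.t. $\preceq$; (iii) for $\mathbf x\in\mathcal X^\circ$, $\epsilon_1<\epsilon_2$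 implies $\mathbf f(\mathbf x;\epsilon_1)\preceq\mathbf f(\mathbf x;\epsilon_2)$ and $\mathbf f(\mathbf x;\epsilon_1)\ne\mathbf f(\mathbf x;\epsilon_2)$; (iv) $\mathbf f(\mathbf 0;\epsilon)=\mathbf f(\mathbf x;0)=\mathbf g(\mathbf 0)=\mathbf 0$, $F(\mathbf x;0)=0$. Matrices $\mathbf X\in\mathcal X^{2L+w}$ have rows $\mathbf x_{-L},\dots,\mathbf x_{L+w-1}$; vector functions act row-wise. $\mathbf A$ is the $(2L+1)\times(2L+w)$ matrix with rows indexed by $j\in\{-L,\dots,L\}$, columns by $k\in\{-L,\dots,L+w-1\}$, $A_{j,k}=1/w$ if $0\le k-j\le w-1$ and $0$ otherwise. Coupled-system potential: $U(\mathbf X;\epsilon)=\mathrm{Tr}(\mathbf g(\mathbf X)\mathbf D\mathbf X^{\mathsf T})-\sum_{i}G(\mathbf x_i)-\sum_{j=-L}^{L}F([\mathbf A\mathbf g(\mathbf X)]_j;\epsilon)$. $\mathbf S$ is the down-shift: $[\mathbf S\mathbf X]_{-L}=\mathbf 0$, $[\mathbf S\mathbf X]_i=\mathbf x_{i-1}$ for $i>-L$. $\mathrm{vec}$ stacks columns. Let $\epsilon_i=\epsilon$ for $i\in\{-L,\dots,L\}$ and $\epsilon_i=0$ otherwise, and $i_0=\lfloor (w-1)/2\rfloor$. A fixed point of the one-sided spatially-coupled system is a matrix $\mathbf X$ (with the convention $\mathbf x_i=\mathbf 0$ for $i<-L$) such that $\mathbf x_i=\frac1w\sum_{k=0}^{w-1}\mathbf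 f\big(\frac1w\sum_{j=0}^{w-1}\mathbf g(\mathbf x_{i+j-k});\epsilon_{i-k}\big)$ for $-L\le i\le i_0$, and $\mathbf x_i=\mathbf x_{i_0}$ for $i_0<i\le L+w-1$. *)

theory Defs
  imports "HOL-Analysis.Analysis"
begin

definition cube :: "(real^'d) set" where
  "cube = {x. \<forall>i. 0 \<le> x$i \<and> x$i \<le> 1}"

definition vle :: "real^'d \<Rightarrow> real^'d \<Rightarrow> bool" where
  "vle x y \<longleftrightarrow> (\<forall>i. x$i \<le> y$i)"

definition C2_on :: "'a::real_normed_vector set \<Rightarrow> ('a \<Rightarrow> 'b::real_normed_vector) \<Rightarrow> bool" where
  "C2_on S h \<longleftrightarrow>
     (\<exists>h' :: 'a \<Rightarrow> ('a \<Rightarrow>\<^sub>L 'b). \<exists>h'' :: 'a \<Rightarrow> ('a \<Rightarrow>\<^sub>L ('a \<Rightarrow>\<^sub>L 'b)).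
        (\<forall>x\<in>S. (h has_derivative blinfun_apply (h' x)) (at x within S)
              \<and> (h' has_derivative blinfun_apply (h'' x)) (at x within S))
        \<and> continuous_on S h'')"

text \<open>Vector admissible system (f,g) with potentials F, G and diagonal matrix D = diag dd.\<close>
definition vector_admissible ::
  "(real^'d \<Rightarrow> real \<Rightarrow> real^'d) \<Rightarrow> (real^'d \<Rightarrow> real^'d) \<Rightarrow>
   (real^'d \<Rightarrow> real \<Rightarrow> real) \<Rightarrow> (real^'d \<Rightarrow> real) \<Rightarrow> real^'d \<Rightarrow> bool" where
  "vector_admissible f g F G dd \<longleftrightarrow>
     (\<forall>c. 0 < dd$c)
   \<and> (\<forall>x\<in>cube. \<forall>e\<in>{0..1}. f x e \<in> cube)
   \<and> (\<forall>x\<in>cube. g x \<in> cube)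
   \<and> (\<forall>e\<in>{0..1}. \<forall>x\<in>cube. ((\<lambda>y. F y e) has_derivative (\<lambda>h. \<Sum>c\<in>UNIV. f x e $ c * dd $ c * h $ c)) (at x within cube))
   \<and> (\<forall>x\<in>cube. (G has_derivative (\<lambda>h. \<Sum>c\<in>UNIV. g x $ c * dd $ c * h $ c)) (at x within cube))
   \<and> (\<forall>e\<in>{0..1}. F 0 e = 0) \<and> G 0 = 0
   \<and> C2_on (cube \<times> {0..1}) (\<lambda>p. f (fst p) (snd p))
   \<and> C2_on cube g
   \<and> (\<forall>e\<in>{0..1}. \<forall>x\<in>cube. \<forall>y\<in>cube. vle x y \<longrightarrow> vle (f x e) (f y e))
   \<and> (\<forall>x\<in>cube. \<forall>y\<in>cube. vle x y \<longrightarrow> vle (g x) (g y))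
   \<and> (\<forall>x\<in>cube - {0}. \<forall>e1\<in>{0..1}. \<forall>e2\<in>{0..1}.
         e1 < e2 \<longrightarrow> vle (f x e1) (f x e2) \<and> f x e1 \<noteq> f x e2)
   \<and> (\<forall>e\<in>{0..1}. f 0 e = 0) \<and> (\<forall>x\<in>cube. f x 0 = 0) \<and> g 0 = 0
   \<and> (\<forall>x\<in>cube. F x 0 = 0)"

text \<open>Coupled-system potential U(X;e); the matrix X has rows X i, i = -L..L+w-1.\<close>
definition Ucp ::
  "(real^'d \<Rightarrow> real^'d) \<Rightarrow> (real^'d \<Rightarrow> real \<Rightarrow> real) \<Rightarrow> (real^'d \<Rightarrow> real) \<Rightarrow> real^'d \<Rightarrow>
   nat \<Rightarrow> nat \<Rightarrow> (int \<Rightarrow> real^'d) \<Rightarrow> real \<Rightarrow> real" where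
  "Ucp g F G dd L w X e =
     (\<Sum>i\<in>{- int L .. int L + int w - 1}. \<Sum>c\<in>UNIV. g (X i) $ c * dd $ c * X i $ c)
   - (\<Sum>i\<in>{- int L .. int L + int w - 1}. G (X i))
   - (\<Sum>j\<in>{- int L .. int L}. F ((1 / real w) *\<^sub>R (\<Sum>k\<in>{j .. j + int w - 1}. g (X k))) e)"

definition one_sided_fp ::
  "(real^'d \<Rightarrow> real \<Rightarrow> real^'d) \<Rightarrow> (real^'d \<Rightarrow> real^'d) \<Rightarrow> nat \<Rightarrow> nat \<Rightarrow> real \<Rightarrow>
   (int \<Rightarrow> real^'d) \<Rightarrow> bool" where
  "one_sided_fp f g L w e X \<longleftrightarrow>
     (let i0 = (int w - 1) div 2;
          eps = (\<lambda>i::int. if - int L \<le> i \<and> i \<le> int L then e else 0)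
      in (\<forall>i < - int L. X i = 0)
       \<and> (\<forall>i\<in>{- int L .. i0}.
            X i = (1 / real w) *\<^sub>R (\<Sum>k\<in>{0 .. int w - 1}.
                    f ((1 / real w) *\<^sub>R (\<Sum>j\<in>{0 .. int w - 1}. g (X (i + j - k)))) (eps (i - k))))
       \<and> (\<forall>i > i0. X i = X i0))"

definition shiftS :: "nat \<Rightarrow> (int \<Rightarrow> real^'d) \<Rightarrow> int \<Rightarrow> real^'d" where
  "shiftS L X i = (if i = - int L then 0 else X (i - 1))"

end

theory Submission
  imports Defs
begin

(* Write the coupled potential as
     U(X) = \<Sum>_i \<Psi>(x_i) - \<Sum>_j F(a_j),   \<Psi>(y) = <g(y) D, y> - G(y),   a_j = (1/w) \<Sum>_{k=j}^{j+w-1} g(x_k).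
   Since \<nabla>G = g D, the derivative of \<Psi> at y in direction h is <g'(y) h D, y>: the product rule term
   <g(y) D, h> cancels against G.  Differentiating the coupling term by the chain rule gives
     \<partial>U/\<partial>x_{i,c} = <g'(x_i) e_c D, x_i - u_i>,   u_i = (1/w) \<Sum>_{j \<in> [-L,L], i-w<j\<le>i} f(a_j; \<epsilon>),
   where u_i is the "coupled update" of row i.  A one-sided fixed point satisfies x_i = u_i for
   -L \<le> i \<le> i0 (after reindexing its defining equation and using f(x;0) = 0), so these partial
   derivatives vanish; and for i > i0 the row is constant, so (S X - X)_i = 0.  Hence every term of
   vec(U') \<cdot> vec(S X - X) is zero. *)

lemma scaled_sum_in_cube:
  fixes h :: "'a \<Rightarrow> real^'d"
  assumes "finite A" "card A = n" "n > 0" "\<And>k. k \<in> A \<Longrightarrow> h k \<in> cube"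
  shows "(1 / real n) *\<^sub>R (\<Sum>k\<in>A. h k) \<in> cube"
  unfolding cube_def
proof (intro CollectI allI conjI)
  fix c
  have bounds: "0 \<le> h k $ c" "h k $ c \<le> 1" if "k \<in> A" for k
    using assms(4)[OF that] by (auto simp: cube_def)
  have "0 \<le> (\<Sum>k\<in>A. h k $ c)" by (simp add: bounds sum_nonneg)
  moreover have "(\<Sum>k\<in>A. h k $ c) \<le> real n"
    using sum_mono[of A "\<lambda>k. h k $ c" "\<lambda>_. 1"] bounds assms(2) by simp
  ultimately show "0 \<le> ((1 / real n) *\<^sub>R (\<Sum>k\<in>A. h k)) $ c"
    "((1 / real n) *\<^sub>R (\<Sum>k\<in>A. h k)) $ c \<le> 1"
    using assms(3) by (auto simp: field_simps)
qed

definition window_avg :: "(real^'d \<Rightarrow> real^'d) \<Rightarrow> nat \<Rightarrow> (int \<Rightarrow> real^'d) \<Rightarrow> int \<Rightarrow> real^'d" where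
  "window_avg g w X j = (1 / real w) *\<^sub>R (\<Sum>k\<in>{j .. j + int w - 1}. g (X k))"

lemma window_avg_in_cube:
  assumes "\<And>k. g (X k) \<in> cube" "w \<ge> 1"
  shows "window_avg g w X j \<in> cube"
  unfolding window_avg_def by (rule scaled_sum_in_cube) (use assms in auto)

definition row_potential :: "(real^'d \<Rightarrow> real^'d) \<Rightarrow> (real^'d \<Rightarrow> real) \<Rightarrow> real^'d \<Rightarrow> real^'d \<Rightarrow> real" where
  "row_potential g G dd y = (\<Sum>c\<in>UNIV. g y $ c * dd $ c * y $ c) - G y"

lemma Ucp_row_form:
  "Ucp g F G dd L w X e =
     (\<Sum>i\<in>{- int L .. int L + int w - 1}. row_potential g G dd (X i))
   - (\<Sum>j\<in>{- int L .. int L}. F (window_avg g w X j) e)"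
  by (simp add: Ucp_def row_potential_def window_avg_def sum_subtractf)

text \<open>Because the gradient of G is g D, the product-rule term <g(x) D, h> cancels and only the
  variation of g survives in the derivative of the row potential.\<close>
lemma row_potential_derivative:
  assumes gd: "(g has_derivative g') (at x within S)"
    and Gd: "(G has_derivative (\<lambda>h. \<Sum>c\<in>UNIV. g x $ c * dd $ c * h $ c)) (at x within S)"
  shows "(row_potential g G dd has_derivative (\<lambda>h. \<Sum>c\<in>UNIV. g' h $ c * dd $ c * x $ c))
           (at x within S)"
proof -
  have coord: "((\<lambda>y. y $ c) has_derivative (\<lambda>h. h $ c)) (at x within S)" for c
    by (rule bounded_linear_imp_has_derivative[OF bounded_linear_vec_nth])
  have g_coord: "((\<lambda>y. g y $ c) has_derivative (\<lambda>h. g' h $ c)) (at x within S)" for c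
    using bounded_linear.has_derivative[OF bounded_linear_vec_nth gd] .
  have product: "((\<lambda>y. g y $ c * dd $ c * y $ c) has_derivative
                   (\<lambda>h. g x $ c * dd $ c * h $ c + g' h $ c * dd $ c * x $ c)) (at x within S)" for c
    by (rule has_derivative_eq_rhs[OF has_derivative_mult[OF
          has_derivative_mult[OF g_coord has_derivative_const] coord]])
       (simp add: fun_eq_iff algebra_simps)
  have "(row_potential g G dd has_derivative
      (\<lambda>h. (\<Sum>c\<in>UNIV. g x $ c * dd $ c * h $ c + g' h $ c * dd $ c * x $ c)
         - (\<Sum>c\<in>UNIV. g x $ c * dd $ c * h $ c))) (at x within S)"
    unfolding row_potential_def by (intro has_derivative_diff has_derivative_sum product Gd)
  then show ?thesis by (simp add: sum.distrib)
qed

lemma sum_row_update_derivative: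
  fixes \<phi> :: "'a \<Rightarrow> 'b::real_normed_vector"
  assumes "((\<lambda>t. \<phi> (\<gamma> t)) has_derivative D) W" "i \<in> I" "finite I"
  shows "((\<lambda>t. \<Sum>k\<in>I. \<phi> ((X(i := \<gamma> t)) k)) has_derivative D) W"
proof -
  have "(\<lambda>t. \<Sum>k\<in>I. \<phi> ((X(i := \<gamma> t)) k)) = (\<lambda>t. \<phi> (\<gamma> t) + (\<Sum>k\<in>I - {i}. \<phi> (X k)))"
    using assms(2,3) by (simp add: sum.remove)
  then show ?thesis
    using has_derivative_add[OF assms(1) has_derivative_const] by simp
qed

lemma window_avg_row_derivative:
  assumes "((\<lambda>t. g (\<gamma> t)) has_derivative (\<lambda>h. h *\<^sub>R v)) W"
  shows "((\<lambda>t. window_avg g w (X(i := \<gamma> t)) j) has_derivative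
           (\<lambda>h. if i \<in> {j .. j + int w - 1} then (h / real w) *\<^sub>R v else 0)) W"
proof -
  have row: "((\<lambda>t. g ((X(i := \<gamma> t)) k)) has_derivative (\<lambda>h. if k = i then h *\<^sub>R v else 0)) W" for k
    using assms by (cases "k = i") auto
  have "((\<lambda>t. \<Sum>k\<in>{j .. j + int w - 1}. g ((X(i := \<gamma> t)) k)) has_derivative
          (\<lambda>h. \<Sum>k\<in>{j .. j + int w - 1}. if k = i then h *\<^sub>R v else 0)) W"
    by (rule has_derivative_sum) (rule row)
  from has_derivative_scaleR_right[OF this, of "1 / real w"] show ?thesis
    unfolding window_avg_def by (rule has_derivative_eq_rhs) (auto simp: fun_eq_iff)
qed

text \<open>It is the right-hand side of the fixed-point equation, and it appears in the
  gradient of the coupling term.\<close>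
definition coupled_update ::
  "(real^'d \<Rightarrow> real \<Rightarrow> real^'d) \<Rightarrow> (real^'d \<Rightarrow> real^'d) \<Rightarrow> nat \<Rightarrow> nat \<Rightarrow> real \<Rightarrow>
   (int \<Rightarrow> real^'d) \<Rightarrow> int \<Rightarrow> real^'d" where
  "coupled_update f g L w e X i =
     (1 / real w) *\<^sub>R (\<Sum>j\<in>{- int L .. int L} \<inter> {i - int w + 1 .. i}. f (window_avg g w X j) e)"

lemma coupled_update_component:
  "coupled_update f g L w e X i $ c =
     (1 / real w) * (\<Sum>j\<in>{- int L .. int L}.
        if i \<in> {j .. j + int w - 1} then f (window_avg g w X j) e $ c else 0)"
proof -
  have "coupled_update f g L w e X i $ c =
          (1 / real w) * (\<Sum>j\<in>{- int L .. int L} \<inter> {i - int w + 1 .. i}. f (window_avg g w X j) e $ c)"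
    by (simp add: coupled_update_def)
  also have "\<dots> = (1 / real w) * (\<Sum>j\<in>{- int L .. int L}.
                    if j \<in> {i - int w + 1 .. i} then f (window_avg g w X j) e $ c else 0)"
    by (simp only: sum.inter_restrict[OF finite_atLeastAtMost_int])
  also have "\<dots> = (1 / real w) * (\<Sum>j\<in>{- int L .. int L}.
                    if i \<in> {j .. j + int w - 1} then f (window_avg g w X j) e $ c else 0)"
    by (intro arg_cong[where f="\<lambda>s. _ * s"] sum.cong) auto
  finally show ?thesis .
qed

text \<open>Derivative of the coupling term \<Sum>_j F(a_j) when row i moves along a curve: by the chain
  rule through \<nabla>F = f D, it is <v D, u_i> per unit speed, where v is the velocity of g(x_i).\<close>
lemma coupling_term_derivative:
  assumes Fd: "\<And>x. x \<in> cube \<Longrightarrow>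
               ((\<lambda>y. F y e) has_derivative (\<lambda>h. \<Sum>c\<in>UNIV. f x e $ c * dd $ c * h $ c)) (at x within cube)"
    and dg: "((\<lambda>t. g (\<gamma> t)) has_derivative (\<lambda>h. h *\<^sub>R v)) (at t0 within T)"
    and t0: "t0 \<in> T" "\<gamma> t0 = X i"
    and rows_cube: "\<And>t k. t \<in> T \<Longrightarrow> g ((X(i := \<gamma> t)) k) \<in> cube"
    and w: "w \<ge> 1"
  shows "((\<lambda>t. \<Sum>j\<in>{- int L .. int L}. F (window_avg g w (X(i := \<gamma> t)) j) e) has_derivative
           (\<lambda>h. h * (\<Sum>c\<in>UNIV. v $ c * dd $ c * coupled_update f g L w e X i $ c))) (at t0 within T)"
proof -
  define A where "A j = (\<Sum>c\<in>UNIV. f (window_avg g w X j) e $ c * dd $ c * v $ c)" for j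
  have per_section: "((\<lambda>t. F (window_avg g w (X(i := \<gamma> t)) j) e) has_derivative
                  (\<lambda>h. if i \<in> {j .. j + int w - 1} then h * (A j / real w) else 0)) (at t0 within T)" for j
  proof -
    have avg_cube: "(\<lambda>t. window_avg g w (X(i := \<gamma> t)) j) ` T \<subseteq> cube"
      using rows_cube w by (auto intro!: window_avg_in_cube)
    from has_derivative_in_compose2[of cube "\<lambda>y. F y e"
        "\<lambda>x h. \<Sum>c\<in>UNIV. f x e $ c * dd $ c * h $ c", OF Fd avg_cube t0(1)
        window_avg_row_derivative[where g=g and \<gamma>=\<gamma>, OF dg]]
    show ?thesis
      by (simp add: t0(2)) (rule has_derivative_eq_rhs,
          auto simp: fun_eq_iff A_def sum_distrib_left sum_divide_distrib algebra_simps)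
  qed
  have collect: "(\<Sum>j\<in>{- int L .. int L}. if i \<in> {j .. j + int w - 1} then h * (A j / real w) else 0)
      = h * (\<Sum>c\<in>UNIV. v $ c * dd $ c * coupled_update f g L w e X i $ c)" for h
    unfolding coupled_update_component A_def
    by (simp add: sum_distrib_left sum_divide_distrib algebra_simps)
       (subst sum.swap, auto intro!: sum.cong simp: sum_distrib_left sum_divide_distrib algebra_simps)
  have "((\<lambda>t. \<Sum>j\<in>{- int L .. int L}. F (window_avg g w (X(i := \<gamma> t)) j) e) has_derivative
          (\<lambda>h. \<Sum>j\<in>{- int L .. int L}. if i \<in> {j .. j + int w - 1} then h * (A j / real w) else 0))
          (at t0 within T)"
    by (rule has_derivative_sum) (rule per_section)
  then show ?thesis unfolding collect .
qed

lemma Ucp_partial_derivative: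
  fixes g' :: "real^'d \<Rightarrow> real^'d \<Rightarrow> real^'d"
  assumes gd: "\<And>x. x \<in> cube \<Longrightarrow> (g has_derivative g' x) (at x within cube)"
    and Gd: "\<And>x. x \<in> cube \<Longrightarrow>
               (G has_derivative (\<lambda>h. \<Sum>c\<in>UNIV. g x $ c * dd $ c * h $ c)) (at x within cube)"
    and Fd: "\<And>x. x \<in> cube \<Longrightarrow>
               ((\<lambda>y. F y e) has_derivative (\<lambda>h. \<Sum>c\<in>UNIV. f x e $ c * dd $ c * h $ c)) (at x within cube)"
    and gc: "\<And>x. x \<in> cube \<Longrightarrow> g x \<in> cube"
    and Xc: "\<And>k. X k \<in> cube"
    and w: "w \<ge> 1"
    and i: "i \<in> {- int L .. int L + int w - 1}"
  shows "((\<lambda>t. Ucp g F G dd L w (X(i := (\<chi> k. if k = c then t else X i $ k))) e) has_real_derivative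
           (\<Sum>c'\<in>UNIV. g' (X i) (axis c 1) $ c' * dd $ c' * (X i - coupled_update f g L w e X i) $ c'))
         (at (X i $ c) within {0..1})"
proof -
  define t0 where "t0 = X i $ c"
  define \<gamma> where "\<gamma> t = X i + (t - t0) *\<^sub>R axis c 1" for t
  define v where "v = g' (X i) (axis c 1)"
  have line: "(\<chi> k. if k = c then t else X i $ k) = \<gamma> t" for t
    by (auto simp: vec_eq_iff axis_def \<gamma>_def t0_def)
  have t0: "t0 \<in> {0..1}" "\<gamma> t0 = X i"
    using Xc[of i] by (auto simp: cube_def t0_def \<gamma>_def)
  have \<gamma>_cube: "\<gamma> ` {0..1} \<subseteq> cube"
    using Xc[of i] by (auto simp: cube_def simp flip: line)
  have rows_cube: "g ((X(i := \<gamma> t)) k) \<in> cube" if "t \<in> {0..1}" for t k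
    using \<gamma>_cube that Xc gc by (auto simp: image_subset_iff)
  have d\<gamma>: "(\<gamma> has_derivative (\<lambda>h. h *\<^sub>R axis c 1)) (at t0 within {0..1})"
    unfolding \<gamma>_def by (auto intro!: derivative_eq_intros)
  have g'_scale: "g' (X i) (h *\<^sub>R axis c 1) = h *\<^sub>R v" for h
    using has_derivative_linear[OF gd[OF Xc]] by (simp add: v_def linear_scale)
  have dg: "((\<lambda>t. g (\<gamma> t)) has_derivative (\<lambda>h. h *\<^sub>R v)) (at t0 within {0..1})"
    using has_derivative_in_compose2[of cube g g' \<gamma>, OF gd \<gamma>_cube t0(1) d\<gamma>]
    by (simp add: t0 g'_scale)
  have d_row: "((\<lambda>t. row_potential g G dd (\<gamma> t)) has_derivative
                 (\<lambda>h. h * (\<Sum>c'\<in>UNIV. v $ c' * dd $ c' * X i $ c'))) (at t0 within {0..1})"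
    using has_derivative_in_compose2[of cube "row_potential g G dd"
        "\<lambda>x h. \<Sum>c'\<in>UNIV. g' x h $ c' * dd $ c' * x $ c'" \<gamma>,
        OF row_potential_derivative[OF gd Gd] \<gamma>_cube t0(1) d\<gamma>]
    by (simp add: g'_scale t0 sum_distrib_left mult.assoc)
  have d_rows: "((\<lambda>t. \<Sum>k\<in>{- int L .. int L + int w - 1}. row_potential g G dd ((X(i := \<gamma> t)) k))
                 has_derivative (\<lambda>h. h * (\<Sum>c'\<in>UNIV. v $ c' * dd $ c' * X i $ c'))) (at t0 within {0..1})"
    by (intro sum_row_update_derivative d_row i finite_atLeastAtMost_int)
  have d_coupling: "((\<lambda>t. \<Sum>j\<in>{- int L .. int L}. F (window_avg g w (X(i := \<gamma> t)) j) e) has_derivative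
           (\<lambda>h. h * (\<Sum>c'\<in>UNIV. v $ c' * dd $ c' * coupled_update f g L w e X i $ c'))) (at t0 within {0..1})"
    using Fd dg t0 rows_cube w by (rule coupling_term_derivative)
  have Ucp_line: "(\<lambda>t. Ucp g F G dd L w (X(i := (\<chi> k. if k = c then t else X i $ k))) e) =
        (\<lambda>t. (\<Sum>k\<in>{- int L .. int L + int w - 1}. row_potential g G dd ((X(i := \<gamma> t)) k))
           - (\<Sum>j\<in>{- int L .. int L}. F (window_avg g w (X(i := \<gamma> t)) j) e))"
    by (simp add: line Ucp_row_form)
  show ?thesis
    unfolding has_field_derivative_def Ucp_line t0_def[symmetric]
    by (rule has_derivative_eq_rhs[OF has_derivative_diff[OF d_rows d_coupling]])
       (auto simp: fun_eq_iff v_def algebra_simps sum_subtractf)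
qed

text \<open>A one-sided fixed point vanishes to the left and is constant to the right, so all of its
  rows lie in the cube once the rows -L, ..., L+w-1 do.\<close>
lemma one_sided_fp_in_cube:
  assumes fp: "one_sided_fp f g L w e X" and w: "w \<ge> 1"
    and rows: "\<forall>i\<in>{- int L .. int L + int w - 1}. X i \<in> cube"
  shows "X k \<in> cube"
proof -
  define i0 where "i0 = (int w - 1) div 2"
  have below: "\<forall>i < - int L. X i = 0" and above: "\<forall>i > i0. X i = X i0"
    using fp by (auto simp: one_sided_fp_def Let_def i0_def)
  have i0: "i0 \<in> {- int L .. int L + int w - 1}"
    using w by (auto simp: i0_def)
  consider "k < - int L" | "k \<in> {- int L .. int L + int w - 1}" | "k > int L + int w - 1"
    by fastforce
  then show ?thesis
  proof cases
    case 1
    then show ?thesis using below by (simp add: cube_def)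
  next
    case 2
    then show ?thesis using rows by simp
  next
    case 3
    then have "X k = X i0" using above i0 by simp
    then show ?thesis using rows i0 by simp
  qed
qed

text \<open>On the rows -L, ..., i0 a one-sided fixed point equals its coupled update: reindex the
  defining equation by the section j = i - k and drop the sections outside [-L, L], where the
  channel parameter is 0 and f(x; 0) = 0.\<close>
lemma one_sided_fp_update:
  assumes fp: "one_sided_fp f g L w e X"
    and f0: "\<And>x. x \<in> cube \<Longrightarrow> f x 0 = 0"
    and gX: "\<And>k. g (X k) \<in> cube" and w: "w \<ge> 1"
    and i: "i \<in> {- int L .. (int w - 1) div 2}"
  shows "X i = coupled_update f g L w e X i"
proof -
  define eps where "eps j = (if - int L \<le> j \<and> j \<le> int L then e else 0)" for j :: int
  have window: "(1 / real w) *\<^sub>R (\<Sum>j\<in>{0 .. int w - 1}. g (X (i + j - k))) = window_avg g w X (i - k)"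
    for k
    unfolding window_avg_def
    by (rule arg_cong[where f="\<lambda>s. _ *\<^sub>R s"], rule sum.reindex_bij_witness[where i="\<lambda>m. m - (i - k)"
          and j="\<lambda>j. j + (i - k)"]) (auto simp: algebra_simps)
  have "X i = (1 / real w) *\<^sub>R (\<Sum>k\<in>{0 .. int w - 1}. f (window_avg g w X (i - k)) (eps (i - k)))"
    using fp i by (simp add: one_sided_fp_def Let_def eps_def window)
  also have "(\<Sum>k\<in>{0 .. int w - 1}. f (window_avg g w X (i - k)) (eps (i - k)))
      = (\<Sum>j\<in>{i - int w + 1 .. i}. f (window_avg g w X j) (eps j))"
    by (rule sum.reindex_bij_witness[where i="\<lambda>j. i - j" and j="\<lambda>k. i - k"]) auto
  also have "\<dots> = (\<Sum>j\<in>{i - int w + 1 .. i}.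
                    if j \<in> {- int L .. int L} then f (window_avg g w X j) e else 0)"
    using f0 window_avg_in_cube[of g X w, OF gX w] by (intro sum.cong) (auto simp: eps_def)
  also have "\<dots> = (\<Sum>j\<in>{- int L .. int L} \<inter> {i - int w + 1 .. i}. f (window_avg g w X j) e)"
    by (simp only: Int_commute[of "{- int L .. int L}"] sum.inter_restrict[OF finite_atLeastAtMost_int])
  finally show ?thesis
    unfolding coupled_update_def .
qed

text \<open>Beyond i0 a one-sided fixed point is constant, so the down-shift does not move it.\<close>
lemma one_sided_fp_shift:
  assumes fp: "one_sided_fp f g L w e X" and w: "w \<ge> 1"
    and i: "(int w - 1) div 2 < i"
  shows "shiftS L X i = X i"
proof -
  define i0 where "i0 = (int w - 1) div 2"
  have above: "\<forall>j > i0. X j = X i0"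
    using fp by (auto simp: one_sided_fp_def Let_def i0_def)
  have "0 \<le> i0" using w by (simp add: i0_def)
  then show ?thesis
    using i above unfolding shiftS_def i0_def[symmetric]
    by (cases "i - 1 = i0") auto
qed

theorem lemma9:
  fixes f :: "real^'d \<Rightarrow> real \<Rightarrow> real^'d" and g :: "real^'d \<Rightarrow> real^'d"
    and F :: "real^'d \<Rightarrow> real \<Rightarrow> real" and G :: "real^'d \<Rightarrow> real"
    and dd :: "real^'d" and e :: real and L w :: nat and X :: "int \<Rightarrow> real^'d"
  assumes "vector_admissible f g F G dd"
    and "e \<in> {0..1}"
    and "w \<ge> 1"
    and "\<forall>i\<in>{- int L .. int L + int w - 1}. X i \<in> cube"
    and "one_sided_fp f g L w e X"
  shows "\<exists>Up :: int \<Rightarrow> 'd \<Rightarrow> real.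
           (\<forall>i\<in>{- int L .. int L + int w - 1}. \<forall>c.
              ((\<lambda>t. Ucp g F G dd L w (X(i := (\<chi> k. if k = c then t else X i $ k))) e)
                 has_real_derivative Up i c) (at (X i $ c) within {0..1}))
         \<and> (\<Sum>i\<in>{- int L .. int L + int w - 1}. \<Sum>c\<in>UNIV.
              Up i c * (shiftS L X i $ c - X i $ c)) = 0"
proof -
  note admissible = assms(1)[unfolded vector_admissible_def]
  obtain g' :: "real^'d \<Rightarrow> ((real^'d) \<Rightarrow>\<^sub>L (real^'d))"
    where gd: "\<And>x. x \<in> cube \<Longrightarrow> (g has_derivative blinfun_apply (g' x)) (at x within cube)"
    using admissible unfolding C2_on_def by metis
  have Xc: "\<And>k. X k \<in> cube"
    using one_sided_fp_in_cube[OF assms(5,3,4)] .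
  define Up where "Up i c = (\<Sum>c'\<in>UNIV. blinfun_apply (g' (X i)) (axis c 1) $ c' * dd $ c' *
                               (X i - coupled_update f g L w e X i) $ c')" for i c
  have partial: "((\<lambda>t. Ucp g F G dd L w (X(i := (\<chi> k. if k = c then t else X i $ k))) e)
                   has_real_derivative Up i c) (at (X i $ c) within {0..1})"
    if "i \<in> {- int L .. int L + int w - 1}" for i c
    unfolding Up_def
    by (rule Ucp_partial_derivative[OF gd]) (use admissible assms(2,3) Xc that in auto)
  have no_motion: "Up i c * (shiftS L X i $ c - X i $ c) = 0"
    if "i \<in> {- int L .. int L + int w - 1}" for i c
  proof (cases "i \<le> (int w - 1) div 2")
    case True
    have "X i = coupled_update f g L w e X i"
      by (rule one_sided_fp_update[OF assms(5)]) (use admissible Xc assms(3) True that in auto)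
    then show ?thesis by (simp add: Up_def)
  next
    case False
    then show ?thesis using one_sided_fp_shift[OF assms(5,3)] by simp
  qed
  show ?thesis
    using partial no_motion by (auto intro!: exI[of _ Up] sum.neutral)
qed

end
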